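(* Let $n\ge2$, $k\ge1$, $i_1,\dots,i_k\in\{1,\dots,n-1\}$, $j\in\{1,\dots,k\}$, and fix integers $a_h$ for $h\neq j$. For $e\in\mathbb{Z}$ let $V_n(e)=V_n(x_{i_1}^{a_1}\cdots x_{i_{j-1}}^{a_{j-1}}x_{i_j}^{e}x_{i_{j+1}}^{a_{j+1}}\cdots x_{i_k}^{a_k})$. Then for all sufficiently large $e$, $V_n(e)$ is a polynomial in $s$, and $\lim_{e\to\infty}\deg V_n(e)=+\infty$.
   Context: $\mathcal{B}_n$ is the Artin braid group with standard generators $x_1,\dots,x_{n-1}$; $\widehat{\beta}$ is the closure of a braid. The Jones polynomial is normalized by $V(\text{unknot})=1$ and $q^{-1}V_{L_+}-qV_{L_-}=(q^{1/2}-q^{-1/2})V_{L_0}$; with $s=q^{-1/2}$ it is a Laurent polynomial in $s$, and $V_n(\beta)=V(\widehat\beta)$. Conventions: closures of $\alpha x_i^{e+2}\gamma$, $\alpha x_i^{e+1}\gamma$, $\alpha x_i^{e}\gamma$ play the roles of $L_-,L_0,L_+$ (e.g. $V_2(x_1^2)=-s-s^5$). For a nonzero Laurent polynomial, $\deg$ is its highest exponent of $s$. *)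

theory Defs
  imports "HOL-Computational_Algebra.Formal_Laurent_Series"
begin

text \<open>A letter (i, True) is the generator x_i, a letter (i, False) is its inverse.
  Strands are numbered 1..n; the generator x_i involves strands i and i+1.\<close>

type_synonym letter = "nat \<times> bool"

definition gen_pow :: "nat \<Rightarrow> int \<Rightarrow> letter list" where
  "gen_pow i a = replicate (nat \<bar>a\<bar>) (i, 0 \<le> a)"

text \<open>The diagram of the closure of a word w of length m in B_n has the points (t,p),
  t \<in> {0..m}, p \<in> {1..n}; the crossing w!t sits between levels t and t+1, and level m is
  joined to level 0 by the closing arcs.  A state st (bool list of length m) chooses at the
  crossing t the A-smoothing (st!t = True) or the B-smoothing.  For x_i (a negative crossing in
  the conventions of the paper) the A-smoothing is the horizontal one (joining (t,i)--(t,i+1) and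
  (t+1,i)--(t+1,i+1)), the B-smoothing the vertical one; for x_i^{-1} it is the other way
  round.\<close>

definition smooth_edge :: "letter list \<Rightarrow> bool list \<Rightarrow> nat \<times> nat \<Rightarrow> nat \<times> nat \<Rightarrow> bool" where
  "smooth_edge w st u v \<longleftrightarrow>
     (\<exists>t p. t < length w \<and> u = (t, p) \<and> v = (Suc t, p) \<and>
        ((p \<noteq> fst (w!t) \<and> p \<noteq> Suc (fst (w!t))) \<or> st!t \<noteq> snd (w!t))) \<or>
     (\<exists>t. t < length w \<and> st!t = snd (w!t) \<and>
        ((u = (t, fst (w!t)) \<and> v = (t, Suc (fst (w!t)))) \<or>
         (u = (Suc t, fst (w!t)) \<and> v = (Suc t, Suc (fst (w!t)))))) \<or>
     (\<exists>p. u = (length w, p) \<and> v = (0, p))"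

definition diag_points :: "nat \<Rightarrow> letter list \<Rightarrow> (nat \<times> nat) set" where
  "diag_points n w = {0..length w} \<times> {1..n}"

definition state_rel :: "nat \<Rightarrow> letter list \<Rightarrow> bool list \<Rightarrow> nat \<times> nat \<Rightarrow> nat \<times> nat \<Rightarrow> bool" where
  "state_rel n w st u v \<longleftrightarrow> u \<in> diag_points n w \<and> v \<in> diag_points n w \<and>
     (smooth_edge w st u v \<or> smooth_edge w st v u)"

text \<open>Number of circles of the smoothed diagram = number of connected components.\<close>
definition num_loops :: "nat \<Rightarrow> letter list \<Rightarrow> bool list \<Rightarrow> nat" where
  "num_loops n w st =
     card ((\<lambda>u. {v \<in> diag_points n w. (state_rel n w st)\<^sup>*\<^sup>* u v}) ` diag_points n w)"

text \<open>Laurent polynomials in the variable A (with A^4 = t^{-1} = q^{-1}).\<close>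
abbreviation monoA :: "int \<Rightarrow> int fls" where
  "monoA k \<equiv> fls_X_intpow k"

definition loop_value :: "int fls" where
  "loop_value = - monoA 2 - monoA (-2)"

definition kauffman_bracket :: "nat \<Rightarrow> letter list \<Rightarrow> int fls" where
  "kauffman_bracket n w =
     (\<Sum>st \<in> {st. length st = length w}.
        monoA (int (count_list st True) - int (count_list st False))
        * loop_value ^ (num_loops n w st - 1))"

text \<open>Writhe: x_i is a negative crossing (closures of alpha x_i^{e+2} gamma, alpha x_i^{e+1} gamma,
  alpha x_i^e gamma are L_-, L_0, L_+).\<close>
definition writhe :: "letter list \<Rightarrow> int" where
  "writhe w = (\<Sum>l\<leftarrow>w. if snd l then -1 else 1)"

definition jones_A :: "nat \<Rightarrow> letter list \<Rightarrow> int fls" where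
  "jones_A n w = (if even (writhe w) then 1 else -1) * monoA (- 3 * writhe w) * kauffman_bracket n w"

text \<open>V_n(w) as a Laurent polynomial in s = q^{-1/2} = A^2 (only even powers of A occur).\<close>
definition jones :: "nat \<Rightarrow> letter list \<Rightarrow> int fls" where
  "jones n w = Abs_fls (\<lambda>k. fls_nth (jones_A n w) (2 * k))"

definition fls_deg :: "int fls \<Rightarrow> int" where
  "fls_deg f = Max {k. fls_nth f k \<noteq> 0}"

definition is_poly_s :: "int fls \<Rightarrow> bool" where
  "is_poly_s f \<longleftrightarrow> (\<forall>k < 0. fls_nth f k = 0)"

end

theory Submission
  imports Defs
begin

text \<open>The closure of the word is evaluated by Kauffman's state sum. Split the word as
  P x_i^e S. In a state, the vertically smoothed crossings of the block x_i^e can be deleted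
  without changing the number of loops, and r > 0 horizontally smoothed ones behave like a
  single one plus r - 1 small extra loops. Summing over the 2^e states of the block therefore
  gives V_n(e) = \<plusminus>s^e (G + H (s - s^3 + ... \<plusminus> s^(2e-1))) with Laurent polynomials G, H
  independent of e. At s = 1 every loop is worth -2, so the coefficient sum of V_n is a sum of
  2^m powers of -2, which is not divisible by 3; hence V_n(0) \<noteq> 0 and G \<noteq> 0. For large e the
  factor s^e removes all negative powers, and the top coefficient, coming from s^(3e-1) times
  the top term of H (or from s^e times that of G if H = 0), never cancels, so the degree grows
  linearly in e.\<close>

unbundle fps_syntax

section \<open>Counting connected components\<close>

definition num_components :: "'a set \<Rightarrow> ('a \<Rightarrow> 'a \<Rightarrow> bool) \<Rightarrow> nat" where
  "num_components A R = card ((\<lambda>u. {v \<in> A. R\<^sup>*\<^sup>* u v}) ` A)"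

lemma num_components_image:
  assumes surj: "\<phi> ` A = B"
    and map_edge: "\<And>x y. R x y \<Longrightarrow> S\<^sup>*\<^sup>* (\<phi> x) (\<phi> y)"
    and lift_edge: "\<And>a b. S a b \<Longrightarrow> \<exists>x\<in>A. \<exists>y\<in>A. \<phi> x = a \<and> \<phi> y = b \<and> R\<^sup>*\<^sup>* x y"
    and connected_fibres: "\<And>x y. x \<in> A \<Longrightarrow> y \<in> A \<Longrightarrow> \<phi> x = \<phi> y \<Longrightarrow> R\<^sup>*\<^sup>* x y"
  shows "num_components A R = num_components B S"
proof -
  have map_path: "S\<^sup>*\<^sup>* (\<phi> x) (\<phi> y)" if "R\<^sup>*\<^sup>* x y" for x y
    using that
  proof (induction rule: rtranclp_induct)
    case (step y z)
    then show ?case using map_edge[of y z] by (meson rtranclp_trans)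
  qed simp
  have lift_path: "\<forall>x\<in>A. \<forall>y\<in>A. \<phi> x = a \<longrightarrow> \<phi> y = b \<longrightarrow> R\<^sup>*\<^sup>* x y" if "S\<^sup>*\<^sup>* a b" for a b
    using that
  proof (induction rule: rtranclp_induct)
    case base
    then show ?case using connected_fibres by blast
  next
    case (step b c)
    show ?case
    proof (intro ballI impI)
      fix x y assume x: "x \<in> A" "\<phi> x = a" and y: "y \<in> A" "\<phi> y = c"
      obtain x' y' where x': "x' \<in> A" "\<phi> x' = b" and y': "y' \<in> A" "\<phi> y' = c"
        and "R\<^sup>*\<^sup>* x' y'"
        using lift_edge[OF step(2)] by blast
      moreover have "R\<^sup>*\<^sup>* x x'" using step(3) x x' by blast
      moreover have "R\<^sup>*\<^sup>* y' y" using connected_fibres[of y' y] x y y' by simp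
      ultimately show "R\<^sup>*\<^sup>* x y" by (meson rtranclp_trans)
    qed
  qed
  have path_iff: "R\<^sup>*\<^sup>* x y \<longleftrightarrow> S\<^sup>*\<^sup>* (\<phi> x) (\<phi> y)" if "x \<in> A" "y \<in> A" for x y
    using map_path lift_path that by blast
  define compA where "compA u = {v \<in> A. R\<^sup>*\<^sup>* u v}" for u
  define compB where "compB a = {b \<in> B. S\<^sup>*\<^sup>* a b}" for a
  have comp_preimage: "compA u = {v \<in> A. \<phi> v \<in> compB (\<phi> u)}" if "u \<in> A" for u
    using path_iff that surj unfolding compA_def compB_def by auto
  have comp_image: "\<phi> ` compA u = compB (\<phi> u)" if "u \<in> A" for u
    using comp_preimage[OF that] surj unfolding compB_def by auto
  have "inj_on (image \<phi>) (compA ` A)"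
  proof (rule inj_onI)
    fix C D assume "C \<in> compA ` A" "D \<in> compA ` A" "\<phi> ` C = \<phi> ` D"
    then obtain u v where "u \<in> A" "v \<in> A" "C = compA u" "D = compA v"
      and "compB (\<phi> u) = compB (\<phi> v)"
      using comp_image by auto
    then show "C = D" using comp_preimage by simp
  qed
  then have "card (compA ` A) = card (image \<phi> ` compA ` A)"
    by (simp add: card_image)
  also have "image \<phi> ` compA ` A = compB ` B"
    using comp_image surj by (auto simp: image_image)
  finally show ?thesis
    unfolding num_components_def compA_def compB_def .
qed

lemma num_components_insert_isolated:
  assumes "z \<notin> B" "finite B" "\<And>a b. R a b \<Longrightarrow> a \<in> B \<and> b \<in> B"
  shows "num_components (insert z B) (\<lambda>a b. R a b \<or> (a = z \<and> b = z)) = Suc (num_components B R)"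
proof -
  define S where "S = (\<lambda>a b. R a b \<or> (a = z \<and> b = z))"
  have path_avoids_z: "v \<noteq> z \<and> R\<^sup>*\<^sup>* u v" if "S\<^sup>*\<^sup>* u v" "u \<noteq> z" for u v
    using that
  proof (induction rule: rtranclp_induct)
    case (step y w)
    then show ?case using assms(1,3) unfolding S_def by (metis rtranclp.rtrancl_into_rtrancl)
  qed simp
  have path_from_z: "v = z" if "S\<^sup>*\<^sup>* z v" for v
    using that
  proof (induction rule: rtranclp_induct)
    case (step y w)
    then show ?case using assms(1,3) unfolding S_def by blast
  qed simp
  have "R\<^sup>*\<^sup>* u v \<Longrightarrow> S\<^sup>*\<^sup>* u v" for u v
    by (erule rtranclp_mono[THEN predicate2D, rotated]) (auto simp: S_def)
  then have "{v \<in> insert z B. S\<^sup>*\<^sup>* u v} = {v \<in> B. R\<^sup>*\<^sup>* u v}" if "u \<in> B" for u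
    using path_avoids_z that assms(1) by auto
  moreover have "{v \<in> insert z B. S\<^sup>*\<^sup>* z v} = {z}"
    using path_from_z by auto
  ultimately have "(\<lambda>u. {v \<in> insert z B. S\<^sup>*\<^sup>* u v}) ` insert z B
      = insert {z} ((\<lambda>u. {v \<in> B. R\<^sup>*\<^sup>* u v}) ` B)"
    by auto
  moreover have "{z} \<notin> (\<lambda>u. {v \<in> B. R\<^sup>*\<^sup>* u v}) ` B"
    using assms(1) by auto
  ultimately show ?thesis
    unfolding num_components_def S_def[symmetric] using assms(2) by simp
qed

section \<open>Loops of a smoothed closed braid\<close>

text \<open>A smoothed diagram is encoded as a word of letters (i, h): the crossing between strands
  i and i+1 at that position is smoothed horizontally if h and vertically otherwise. The
  edges are those of smooth_edge in the definitions, with the state absorbed into the word.\<close>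

definition smoothing_edge :: "(nat \<times> bool) list \<Rightarrow> nat \<times> nat \<Rightarrow> nat \<times> nat \<Rightarrow> bool" where
  "smoothing_edge cs u v \<longleftrightarrow>
     (\<exists>t p. t < length cs \<and> u = (t, p) \<and> v = (Suc t, p) \<and>
        ((p \<noteq> fst (cs!t) \<and> p \<noteq> Suc (fst (cs!t))) \<or> \<not> snd (cs!t))) \<or>
     (\<exists>t. t < length cs \<and> snd (cs!t) \<and>
        ((u = (t, fst (cs!t)) \<and> v = (t, Suc (fst (cs!t)))) \<or>
         (u = (Suc t, fst (cs!t)) \<and> v = (Suc t, Suc (fst (cs!t)))))) \<or>
     (\<exists>p. u = (length cs, p) \<and> v = (0, p))"

definition collapse_level :: "nat \<Rightarrow> nat \<times> nat \<Rightarrow> nat \<times> nat" where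
  "collapse_level t0 = (\<lambda>(t, p). (if t \<le> t0 then t else t - 1, p))"

lemma smoothing_edge_vertical:
  "t < length cs \<Longrightarrow> (p \<noteq> fst (cs!t) \<and> p \<noteq> Suc (fst (cs!t))) \<or> \<not> snd (cs!t)
   \<Longrightarrow> smoothing_edge cs (t, p) (Suc t, p)"
  unfolding smoothing_edge_def by blast

lemma smoothing_edge_horizontal_below:
  "t < length cs \<Longrightarrow> snd (cs!t) \<Longrightarrow> fst (cs!t) = i \<Longrightarrow> smoothing_edge cs (t, i) (t, Suc i)"
  unfolding smoothing_edge_def by blast

lemma smoothing_edge_horizontal_above:
  "t < length cs \<Longrightarrow> snd (cs!t) \<Longrightarrow> fst (cs!t) = i \<Longrightarrow> smoothing_edge cs (Suc t, i) (Suc t, Suc i)"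
  unfolding smoothing_edge_def by blast

lemma smoothing_edge_closing: "t = length cs \<Longrightarrow> smoothing_edge cs (t, p) (0, p)"
  unfolding smoothing_edge_def by blast

lemma smoothing_edge_cases:
  assumes "smoothing_edge cs u v"
  obtains (vertical) t p where "t < length cs" "u = (t, p)" "v = (Suc t, p)"
      "(p \<noteq> fst (cs!t) \<and> p \<noteq> Suc (fst (cs!t))) \<or> \<not> snd (cs!t)"
  | (below) t where "t < length cs" "snd (cs!t)" "u = (t, fst (cs!t))" "v = (t, Suc (fst (cs!t)))"
  | (above) t where "t < length cs" "snd (cs!t)" "u = (Suc t, fst (cs!t))" "v = (Suc t, Suc (fst (cs!t)))"
  | (closing) p where "u = (length cs, p)" "v = (0, p)"
  using assms unfolding smoothing_edge_def by blast

lemmas smoothing_edge_intros = smoothing_edge_vertical smoothing_edge_horizontal_below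
  smoothing_edge_horizontal_above smoothing_edge_closing

lemma less_eq_Suc_cases:
  fixes t t0 :: nat
  obtains "t < t0" | "t = t0" | t' where "t = Suc t'" "t0 \<le> t'"
proof (cases "t \<le> t0")
  case True
  then show ?thesis using that(1,2) by linarith
next
  case False
  then obtain t' where "t = Suc t'" by (cases t) auto
  then show ?thesis using False that(3) by simp
qed

lemma smoothing_edge_collapse:
  assumes "smoothing_edge (xs @ l # ys) x y"
  shows "collapse_level (length xs) x = collapse_level (length xs) y
    \<or> smoothing_edge (xs @ ys) (collapse_level (length xs) x) (collapse_level (length xs) y)
    \<or> snd l \<and> collapse_level (length xs) x = (length xs, fst l)
        \<and> collapse_level (length xs) y = (length xs, Suc (fst l))"
  using assms
proof (cases rule: smoothing_edge_cases)
  case (vertical t p)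
  then show ?thesis
    by (cases rule: less_eq_Suc_cases[of t "length xs"])
     (auto simp: collapse_level_def nth_append Suc_diff_le intro!: smoothing_edge_intros)
next
  case (below t)
  then show ?thesis
    by (cases rule: less_eq_Suc_cases[of t "length xs"])
     (auto simp: collapse_level_def nth_append Suc_diff_le intro!: smoothing_edge_intros)
next
  case (above t)
  then show ?thesis
    by (cases rule: less_eq_Suc_cases[of t "length xs"])
     (auto simp: collapse_level_def nth_append Suc_diff_le intro!: smoothing_edge_intros)
next
  case (closing p)
  then show ?thesis by (auto simp: collapse_level_def intro!: smoothing_edge_intros)
qed

lemma smoothing_edge_lift:
  assumes "smoothing_edge (xs @ ys) a b"
  obtains x y where "collapse_level (length xs) x = a" "collapse_level (length xs) y = b"
    "smoothing_edge (xs @ l # ys) x y"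
  using assms
proof (cases rule: smoothing_edge_cases)
  case (vertical t p)
  show ?thesis
  proof (cases "t < length xs")
    case True
    with vertical show ?thesis
      by (intro that[of "(t, p)" "(Suc t, p)"])
        (auto simp: collapse_level_def nth_append intro!: smoothing_edge_vertical)
  next
    case False
    with vertical show ?thesis
      by (intro that[of "(Suc t, p)" "(Suc (Suc t), p)"])
        (auto simp: collapse_level_def nth_append Suc_diff_le intro!: smoothing_edge_vertical)
  qed
next
  case (below t)
  show ?thesis
  proof (cases "t < length xs")
    case True
    with below show ?thesis
      by (intro that[of "(t, fst ((xs @ ys) ! t))" "(t, Suc (fst ((xs @ ys) ! t)))"])
        (auto simp: collapse_level_def nth_append intro!: smoothing_edge_horizontal_below)
  next
    case False
    with below show ?thesis
      by (intro that[of "(Suc t, fst ((xs @ ys) ! t))" "(Suc t, Suc (fst ((xs @ ys) ! t)))"])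
        (auto simp: collapse_level_def nth_append Suc_diff_le intro!: smoothing_edge_horizontal_below)
  qed
next
  case (above t)
  show ?thesis
  proof (cases "t < length xs")
    case True
    with above show ?thesis
      by (intro that[of "(Suc t, fst ((xs @ ys) ! t))" "(Suc t, Suc (fst ((xs @ ys) ! t)))"])
        (auto simp: collapse_level_def nth_append intro!: smoothing_edge_horizontal_above)
  next
    case False
    with above show ?thesis
      by (intro that[of "(Suc (Suc t), fst ((xs @ ys) ! t))" "(Suc (Suc t), Suc (fst ((xs @ ys) ! t)))"])
        (auto simp: collapse_level_def nth_append Suc_diff_le intro!: smoothing_edge_horizontal_above)
  qed
next
  case (closing p)
  then show ?thesis
    by (intro that[of "(Suc (length (xs @ ys)), p)" "(0, p)"])
      (auto simp: collapse_level_def intro!: smoothing_edge_intros)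
qed

lemma collapse_level_eq_cases:
  assumes "collapse_level t0 x = collapse_level t0 y"
  obtains "x = y" | p where "x = (t0, p)" "y = (Suc t0, p)" | p where "y = (t0, p)" "x = (Suc t0, p)"
  using assms by (cases x; cases y) (auto simp: collapse_level_def split: if_splits)

definition grid :: "nat \<Rightarrow> nat \<Rightarrow> (nat \<times> nat) set" where
  "grid n m = {0..m} \<times> {1..n}"

definition smoothing_rel :: "nat \<Rightarrow> (nat \<times> bool) list \<Rightarrow> nat \<times> nat \<Rightarrow> nat \<times> nat \<Rightarrow> bool" where
  "smoothing_rel n cs u v \<longleftrightarrow> u \<in> grid n (length cs) \<and> v \<in> grid n (length cs) \<and>
     (smoothing_edge cs u v \<or> smoothing_edge cs v u)"

definition loops :: "nat \<Rightarrow> (nat \<times> bool) list \<Rightarrow> nat" where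
  "loops n cs = num_components (grid n (length cs)) (smoothing_rel n cs)"

lemma mem_grid [simp]: "(t, p) \<in> grid n m \<longleftrightarrow> t \<le> m \<and> 1 \<le> p \<and> p \<le> n"
  unfolding grid_def by auto

lemma finite_grid: "finite (grid n m)"
  unfolding grid_def by simp

lemma collapse_level_surj:
  assumes "a \<in> grid n m" "t0 \<le> m"
  obtains x where "x \<in> grid n (Suc m)" "fst x \<noteq> Suc t0" "collapse_level t0 x = a"
proof -
  obtain t p where "a = (t, p)" by (cases a)
  with assms show thesis
    by (intro that[of "if t \<le> t0 then (t, p) else (Suc t, p)"]) (auto simp: collapse_level_def)
qed

lemma collapse_level_grid:
  assumes "t0 \<le> m"
  shows "collapse_level t0 ` grid n (Suc m) = grid n m"
proof
  show "collapse_level t0 ` grid n (Suc m) \<subseteq> grid n m"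
    using assms by (auto simp: grid_def collapse_level_def)
  show "grid n m \<subseteq> collapse_level t0 ` grid n (Suc m)"
    using collapse_level_surj[OF _ assms] by (metis image_eqI subsetI)
qed

lemma collapse_level_in_grid: "collapse_level t0 x \<in> grid n m \<Longrightarrow> x \<in> grid n (Suc m)"
  by (cases x) (auto simp: collapse_level_def split: if_splits)

lemma smoothing_rel_rtranclp:
  "x \<in> grid n (length cs) \<Longrightarrow> y \<in> grid n (length cs) \<Longrightarrow>
    x = y \<or> smoothing_edge cs x y \<or> smoothing_edge cs y x \<Longrightarrow> (smoothing_rel n cs)\<^sup>*\<^sup>* x y"
  unfolding smoothing_rel_def by auto

lemma smoothing_rel_lift:
  assumes "smoothing_rel n (xs @ ys) a b"
  shows "\<exists>x\<in>grid n (Suc (length (xs @ ys))). \<exists>y\<in>grid n (Suc (length (xs @ ys))).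
    collapse_level (length xs) x = a \<and> collapse_level (length xs) y = b
    \<and> (smoothing_rel n (xs @ l # ys))\<^sup>*\<^sup>* x y"
proof -
  obtain x y where xy: "collapse_level (length xs) x = a" "collapse_level (length xs) y = b"
    and "smoothing_edge (xs @ l # ys) x y \<or> smoothing_edge (xs @ l # ys) y x"
    using assms unfolding smoothing_rel_def by (metis smoothing_edge_lift)
  moreover have "x \<in> grid n (Suc (length (xs @ ys)))" "y \<in> grid n (Suc (length (xs @ ys)))"
    using assms xy unfolding smoothing_rel_def by (auto intro: collapse_level_in_grid)
  ultimately show ?thesis
    by (intro bexI[of _ x] bexI[of _ y] conjI smoothing_rel_rtranclp) auto
qed

lemma loops_delete_vertical: "loops n (xs @ (i, False) # ys) = loops n (xs @ ys)"
proof -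
  let ?cs = "xs @ (i, False) # ys" and ?\<phi> = "collapse_level (length xs)"
  have grid_eq: "grid n (length ?cs) = grid n (Suc (length (xs @ ys)))" by simp
  have "num_components (grid n (length ?cs)) (smoothing_rel n ?cs)
      = num_components (grid n (length (xs @ ys))) (smoothing_rel n (xs @ ys))"
    unfolding grid_eq
  proof (rule num_components_image)
    show image: "?\<phi> ` grid n (Suc (length (xs @ ys))) = grid n (length (xs @ ys))"
      by (rule collapse_level_grid) simp
    fix x y assume "smoothing_rel n ?cs x y"
    then show "(smoothing_rel n (xs @ ys))\<^sup>*\<^sup>* (?\<phi> x) (?\<phi> y)"
      using image smoothing_edge_collapse[of xs "(i, False)" ys x y]
        smoothing_edge_collapse[of xs "(i, False)" ys y x]
      by (intro smoothing_rel_rtranclp) (auto simp: smoothing_rel_def)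
  next
    fix x y assume xy: "x \<in> grid n (Suc (length (xs @ ys)))" "y \<in> grid n (Suc (length (xs @ ys)))"
    assume "?\<phi> x = ?\<phi> y"
    then show "(smoothing_rel n ?cs)\<^sup>*\<^sup>* x y"
      by (cases rule: collapse_level_eq_cases)
        (use xy in \<open>auto intro!: smoothing_rel_rtranclp smoothing_edge_vertical simp: nth_append\<close>)
  qed (rule smoothing_rel_lift)
  then show ?thesis unfolding loops_def .
qed

lemma smoothing_edge_double_horizontal_loop:
  assumes "smoothing_edge (xs @ (i, True) # (i, True) # ys) u v"
  shows "u \<in> {(Suc (length xs), i), (Suc (length xs), Suc i)}
    \<longleftrightarrow> v \<in> {(Suc (length xs), i), (Suc (length xs), Suc i)}"
  using assms
proof (cases rule: smoothing_edge_cases)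
  case (vertical t p)
  then show ?thesis
    by (cases rule: less_eq_Suc_cases[of t "length xs"]) (auto simp: nth_append)
next
  case (below t)
  then show ?thesis
    by (cases rule: less_eq_Suc_cases[of t "length xs"]) (auto simp: nth_append)
next
  case (above t)
  then show ?thesis
    by (cases rule: less_eq_Suc_cases[of t "length xs"]) (auto simp: nth_append)
qed auto

lemma smoothing_edge_double_horizontal_collapse:
  assumes "smoothing_edge (xs @ (i, True) # (i, True) # ys) x y"
    and "x \<notin> {(Suc (length xs), i), (Suc (length xs), Suc i)}"
  shows "collapse_level (length xs) x = collapse_level (length xs) y
    \<or> smoothing_edge (xs @ (i, True) # ys) (collapse_level (length xs) x) (collapse_level (length xs) y)"
proof -
  have "\<not> (collapse_level (length xs) x = (length xs, i)
      \<and> collapse_level (length xs) y = (length xs, Suc i))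
    \<or> smoothing_edge (xs @ (i, True) # ys) (length xs, i) (length xs, Suc i)"
    by (auto intro!: smoothing_edge_horizontal_below)
  then show ?thesis
    using smoothing_edge_collapse[OF assms(1)[unfolded append_Cons[symmetric]]] by auto
qed

lemma smoothing_edge_double_horizontal_lift:
  assumes "smoothing_edge (xs @ (i, True) # ys) a b"
  obtains x y where "x \<notin> {(Suc (length xs), i), (Suc (length xs), Suc i)}"
    "y \<notin> {(Suc (length xs), i), (Suc (length xs), Suc i)}"
    "collapse_level (length xs) x = a" "collapse_level (length xs) y = b"
    "x = y \<or> smoothing_edge (xs @ (i, True) # (i, True) # ys) x y
      \<or> smoothing_edge (xs @ (i, True) # (i, True) # ys) y x"
proof -
  let ?L = "{(Suc (length xs), i), (Suc (length xs), Suc i)}"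
  obtain x y where xy: "collapse_level (length xs) x = a" "collapse_level (length xs) y = b"
    and edge: "smoothing_edge (xs @ (i, True) # (i, True) # ys) x y"
    by (rule smoothing_edge_lift[OF assms])
  show thesis
  proof (cases "x \<in> ?L")
    case False
    then show thesis
      using that xy edge smoothing_edge_double_horizontal_loop[OF edge] by blast
  next
    case True
    \<comment> \<open>an edge of the small loop collapses onto the horizontal arc below it, which is
      already an edge of the longer word\<close>
    then have "y \<in> ?L" using smoothing_edge_double_horizontal_loop[OF edge] by blast
    with True xy have "a \<in> {(length xs, i), (length xs, Suc i)}" "b \<in> {(length xs, i), (length xs, Suc i)}"
      by (auto simp: collapse_level_def)
    moreover have "smoothing_edge (xs @ (i, True) # (i, True) # ys) (length xs, i) (length xs, Suc i)"
      by (auto intro!: smoothing_edge_horizontal_below)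
    ultimately show thesis
      by (intro that[of a b]) (auto simp: collapse_level_def)
  qed
qed

text \<open>Between two equal horizontal smoothings the points (t0+1, i) and (t0+1, i+1) form a
  loop of their own; collapse_loop sends it to (0, 0), which is not a grid point because
  strands are numbered from 1.\<close>

definition collapse_loop :: "nat \<Rightarrow> nat \<Rightarrow> nat \<times> nat \<Rightarrow> nat \<times> nat" where
  "collapse_loop t0 i x = (if x \<in> {(Suc t0, i), (Suc t0, Suc i)} then (0, 0) else collapse_level t0 x)"

lemma collapse_loop_grid:
  assumes "1 \<le> i" "i < n" "t0 \<le> m"
  shows "collapse_loop t0 i ` grid n (Suc m) = insert (0, 0) (grid n m)"
proof
  show "collapse_loop t0 i ` grid n (Suc m) \<subseteq> insert (0, 0) (grid n m)"
    using collapse_level_grid[OF assms(3)] by (auto simp: collapse_loop_def)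
  have "(0, 0) \<in> collapse_loop t0 i ` grid n (Suc m)"
    using assms by (auto simp: collapse_loop_def intro!: image_eqI[of _ _ "(Suc t0, i)"])
  moreover have "a \<in> collapse_loop t0 i ` grid n (Suc m)" if a: "a \<in> grid n m" for a
  proof -
    obtain x where "x \<in> grid n (Suc m)" "fst x \<noteq> Suc t0" "collapse_level t0 x = a"
      by (rule collapse_level_surj[OF a assms(3)])
    then show ?thesis by (auto simp: collapse_loop_def intro!: image_eqI[of _ _ x])
  qed
  ultimately show "insert (0, 0) (grid n m) \<subseteq> collapse_loop t0 i ` grid n (Suc m)" by blast
qed

lemma collapse_loop_edge:
  assumes "smoothing_rel n (xs @ (i, True) # (i, True) # ys) x y"
  shows "collapse_loop (length xs) i x = collapse_loop (length xs) i y
    \<or> smoothing_rel n (xs @ (i, True) # ys) (collapse_loop (length xs) i x) (collapse_loop (length xs) i y)"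
proof -
  let ?L = "{(Suc (length xs), i), (Suc (length xs), Suc i)}" and ?c = "collapse_level (length xs)"
  have L_iff: "x \<in> ?L \<longleftrightarrow> y \<in> ?L"
    using assms smoothing_edge_double_horizontal_loop unfolding smoothing_rel_def by blast
  have "?c x \<in> grid n (length (xs @ (i, True) # ys))" "?c y \<in> grid n (length (xs @ (i, True) # ys))"
    using assms collapse_level_grid[of "length xs" "length (xs @ (i, True) # ys)" n]
    unfolding smoothing_rel_def by auto
  then show ?thesis
    using L_iff assms smoothing_edge_double_horizontal_collapse[of xs i ys x y]
      smoothing_edge_double_horizontal_collapse[of xs i ys y x]
    by (auto simp: collapse_loop_def smoothing_rel_def)
qed

lemma collapse_loop_lift:
  assumes "smoothing_rel n (xs @ (i, True) # ys) a b"
  shows "\<exists>x\<in>grid n (Suc (length (xs @ (i, True) # ys))). \<exists>y\<in>grid n (Suc (length (xs @ (i, True) # ys))).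
    collapse_loop (length xs) i x = a \<and> collapse_loop (length xs) i y = b
    \<and> (smoothing_rel n (xs @ (i, True) # (i, True) # ys))\<^sup>*\<^sup>* x y"
proof -
  let ?L = "{(Suc (length xs), i), (Suc (length xs), Suc i)}" and ?c = "collapse_level (length xs)"
  obtain x y where "x \<notin> ?L" "y \<notin> ?L" and xy: "?c x = a" "?c y = b"
    and "x = y \<or> smoothing_edge (xs @ (i, True) # (i, True) # ys) x y
      \<or> smoothing_edge (xs @ (i, True) # (i, True) # ys) y x"
    using assms unfolding smoothing_rel_def by (metis smoothing_edge_double_horizontal_lift)
  moreover have "x \<in> grid n (Suc (length (xs @ (i, True) # ys)))" "y \<in> grid n (Suc (length (xs @ (i, True) # ys)))"
    using assms xy unfolding smoothing_rel_def by (auto intro: collapse_level_in_grid)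
  ultimately show ?thesis
    by (intro bexI[of _ x] bexI[of _ y] conjI smoothing_rel_rtranclp) (auto simp: collapse_loop_def)
qed

lemma collapse_loop_fibres:
  assumes "x \<in> grid n (length (xs @ (i, True) # (i, True) # ys))"
    "y \<in> grid n (length (xs @ (i, True) # (i, True) # ys))"
    "collapse_loop (length xs) i x = collapse_loop (length xs) i y"
  shows "(smoothing_rel n (xs @ (i, True) # (i, True) # ys))\<^sup>*\<^sup>* x y"
proof -
  let ?L = "{(Suc (length xs), i), (Suc (length xs), Suc i)}" and ?c = "collapse_level (length xs)"
  consider "x \<in> ?L" "y \<in> ?L" | "x \<notin> ?L" "y \<notin> ?L" "?c x = ?c y"
    using assms by (cases x; cases y) (auto simp: collapse_loop_def collapse_level_def split: if_splits)
  then show ?thesis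
  proof cases
    case 1
    with assms show ?thesis
      by (auto intro!: smoothing_rel_rtranclp smoothing_edge_horizontal_above simp: nth_append)
  next
    case 2
    from \<open>?c x = ?c y\<close> show ?thesis
      by (cases rule: collapse_level_eq_cases)
        (use assms 2 in \<open>auto intro!: smoothing_rel_rtranclp smoothing_edge_vertical simp: nth_append\<close>)
  qed
qed

lemma loops_double_horizontal:
  assumes "1 \<le> i" "i < n"
  shows "loops n (xs @ (i, True) # (i, True) # ys) = Suc (loops n (xs @ (i, True) # ys))"
proof -
  let ?cs = "xs @ (i, True) # ys" and ?z = "(0, 0) :: nat \<times> nat"
  define S where "S a b \<longleftrightarrow> smoothing_rel n ?cs a b \<or> (a = ?z \<and> b = ?z)" for a b
  have "loops n (xs @ (i, True) # (i, True) # ys) = num_components (insert ?z (grid n (length ?cs))) S"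
    unfolding loops_def
  proof (rule num_components_image[where \<phi> = "collapse_loop (length xs) i"])
    show "collapse_loop (length xs) i ` grid n (length (xs @ (i, True) # (i, True) # ys))
      = insert ?z (grid n (length ?cs))"
      using collapse_loop_grid[OF assms] by simp
  next
    fix x y assume "smoothing_rel n (xs @ (i, True) # (i, True) # ys) x y"
    then show "S\<^sup>*\<^sup>* (collapse_loop (length xs) i x) (collapse_loop (length xs) i y)"
      using collapse_loop_edge unfolding S_def by fastforce
  next
    fix a b assume "S a b"
    then consider "a = ?z" "b = ?z" | "smoothing_rel n ?cs a b"
      unfolding S_def by blast
    then show "\<exists>x\<in>grid n (length (xs @ (i, True) # (i, True) # ys)).
      \<exists>y\<in>grid n (length (xs @ (i, True) # (i, True) # ys)).
      collapse_loop (length xs) i x = a \<and> collapse_loop (length xs) i y = b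
      \<and> (smoothing_rel n (xs @ (i, True) # (i, True) # ys))\<^sup>*\<^sup>* x y"
    proof cases
      case 1
      with assms show ?thesis
        by (intro bexI[of _ "(Suc (length xs), i)"]) (auto simp: collapse_loop_def)
    next
      case 2
      then show ?thesis using collapse_loop_lift by simp
    qed
  qed (rule collapse_loop_fibres)
  also have "\<dots> = Suc (loops n ?cs)"
    unfolding S_def loops_def
    by (rule num_components_insert_isolated) (auto simp: finite_grid smoothing_rel_def)
  finally show ?thesis .
qed

lemma loops_power_horizontal:
  assumes "1 \<le> i" "i < n"
  shows "loops n (xs @ map (Pair i) b @ ys) =
    (if True \<in> set b then loops n (xs @ (i, True) # ys) + count_list b True - 1 else loops n (xs @ ys))"
proof (induction b arbitrary: xs)
  case (Cons x b)
  show ?case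
  proof (cases x)
    case False
    then show ?thesis
      using Cons.IH[of xs] loops_delete_vertical[of n xs i "map (Pair i) b @ ys"] by simp
  next
    case True
    have "loops n (xs @ map (Pair i) (x # b) @ ys) = loops n ((xs @ [(i, True)]) @ map (Pair i) b @ ys)"
      using True by simp
    also have "\<dots> = loops n (xs @ (i, True) # ys) + count_list (x # b) True - 1"
      using Cons.IH[of "xs @ [(i, True)]"] True loops_double_horizontal[OF assms, of xs ys]
      by (auto simp: count_list_0_iff)
    finally show ?thesis using True by simp
  qed
qed simp

lemma loops_pos:
  assumes "1 \<le> n"
  shows "1 \<le> loops n cs"
proof -
  have "grid n (length cs) \<noteq> {}" using assms mem_grid[of 0 1 n] by blast
  then show ?thesis
    unfolding loops_def num_components_def by (auto simp: Suc_le_eq card_gt_0_iff finite_grid)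
qed

section \<open>The Jones polynomial as a state sum in s\<close>

definition smoothing_word :: "letter list \<Rightarrow> bool list \<Rightarrow> (nat \<times> bool) list" where
  "smoothing_word w st = map (\<lambda>(l, x). (fst l, x = snd l)) (zip w st)"

lemma smoothing_word_append:
  "length u = length P \<Longrightarrow> smoothing_word (P @ Q) (u @ v) = smoothing_word P u @ smoothing_word Q v"
  unfolding smoothing_word_def by simp

lemma smoothing_word_replicate:
  "length b = e \<Longrightarrow> smoothing_word (replicate e (i, True)) b = map (Pair i) b"
  unfolding smoothing_word_def by (simp add: zip_replicate1)

lemma num_loops_eq_loops:
  assumes "length st = length w"
  shows "num_loops n w st = loops n (smoothing_word w st)"
proof -
  have "smooth_edge w st = smoothing_edge (smoothing_word w st)"
    using assms by (intro ext) (simp add: smooth_edge_def smoothing_edge_def smoothing_word_def cong: conj_cong)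
  then have "state_rel n w st = smoothing_rel n (smoothing_word w st)"
    using assms by (intro ext) (simp add: state_rel_def smoothing_rel_def diag_points_def grid_def smoothing_word_def)
  then show ?thesis
    using assms by (simp add: num_loops_def loops_def num_components_def diag_points_def grid_def smoothing_word_def)
qed

definition loop_value_s :: "int fls" where
  "loop_value_s = - monoA 1 - monoA (-1)"

definition parity_sign :: "int \<Rightarrow> int fls" where
  "parity_sign z = (if even z then 1 else -1)"

definition state_balance :: "bool list \<Rightarrow> int" where
  "state_balance st = int (count_list st True) - int (count_list st False)"

lemma card_bool_lists_length: "card {st :: bool list. length st = m} = 2 ^ m"
  using card_lists_length_eq[of "UNIV :: bool set" m] by simp

lemma sum_bool_lists_length_Suc:
  fixes f :: "bool list \<Rightarrow> 'a :: comm_monoid_add"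
  shows "(\<Sum>b | length b = Suc e. f b) = (\<Sum>b | length b = e. f (True # b)) + (\<Sum>b | length b = e. f (False # b))"
proof -
  have "{b :: bool list. length b = Suc e} = Cons True ` {b. length b = e} \<union> Cons False ` {b. length b = e}"
    by (auto simp: length_Suc_conv)
  then have "sum f {b. length b = Suc e} = sum f (Cons True ` {b. length b = e}) + sum f (Cons False ` {b. length b = e})"
    by (simp only:) (rule sum.union_disjoint, auto simp: finite_list_length)
  then show ?thesis by (simp add: sum.reindex)
qed

lemma sum_bool_lists_length_add:
  fixes f :: "bool list \<Rightarrow> 'a :: comm_monoid_add"
  shows "(\<Sum>st | length st = a + b. f st) = (\<Sum>u | length u = a. \<Sum>v | length v = b. f (u @ v))"
proof -
  have lists_eq: "{st :: bool list. length st = a + b} = (\<lambda>(u, v). u @ v) ` ({u. length u = a} \<times> {v. length v = b})"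
    by (auto intro!: image_eqI[where x = "(take a st, drop a st)" for st])
  have "inj_on (\<lambda>(u, v). u @ v) ({u :: bool list. length u = a} \<times> {v. length v = b})"
    by (auto simp: inj_on_def)
  then have "(\<Sum>st | length st = a + b. f st) = (\<Sum>(u, v) \<in> {u. length u = a} \<times> {v. length v = b}. f (u @ v))"
    unfolding lists_eq by (subst sum.reindex) (auto intro!: sum.cong)
  then show ?thesis by (simp add: sum.cartesian_product)
qed

lemma writhe_append: "writhe (u @ v) = writhe u + writhe v"
  unfolding writhe_def by simp

lemma writhe_replicate_True: "writhe (replicate e (i, True)) = - int e"
  unfolding writhe_def by (induction e) auto

lemma even_writhe_add_length: "even (writhe w + int (length w))"
  unfolding writhe_def by (induction w) auto

lemma state_balance_eq: "state_balance st = 2 * int (count_list st True) - int (length st)"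
proof -
  have "count_list st True + count_list st False = length st"
    by (induction st) auto
  then show ?thesis unfolding state_balance_def by linarith
qed

lemma state_balance_append: "state_balance (u @ v) = state_balance u + state_balance v"
  unfolding state_balance_def by simp

text \<open>The bracket only involves even powers of A, so the Jones polynomial is the same
  state sum with A^2 = s.\<close>

lemma fls_compose_power_sum:
  "fls_compose_power (\<Sum>x\<in>A. f x) d = (\<Sum>x\<in>A. fls_compose_power (f x) d)"
  by (induction A rule: infinite_finite_induct) auto

lemma jones_state_sum:
  "jones n w = parity_sign (writhe w) *
     (\<Sum>st | length st = length w. monoA ((state_balance st - 3 * writhe w) div 2)
        * loop_value_s ^ (num_loops n w st - 1))"
  (is "_ = ?J")
proof -
  have even_exp: "2 * ((state_balance st - 3 * writhe w) div 2) = state_balance st - 3 * writhe w"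
    if "length st = length w" for st
    using even_writhe_add_length[of w] that by (simp add: state_balance_eq even_add)
  have "fls_compose_power ?J 2 = parity_sign (writhe w) *
     (\<Sum>st | length st = length w. monoA (2 * ((state_balance st - 3 * writhe w) div 2))
        * loop_value ^ (num_loops n w st - 1))"
    by (simp add: fls_compose_power_sum parity_sign_def loop_value_s_def loop_value_def)
  also have "\<dots> = parity_sign (writhe w) *
     (\<Sum>st | length st = length w. monoA (- 3 * writhe w) * monoA (state_balance st)
        * loop_value ^ (num_loops n w st - 1))"
  proof (intro arg_cong[where f = "(*) _"] sum.cong refl)
    fix st :: "bool list" assume "st \<in> {st. length st = length w}"
    then have "monoA (2 * ((state_balance st - 3 * writhe w) div 2)) = monoA (- 3 * writhe w + state_balance st)"
      using even_exp by (intro arg_cong[where f = fls_X_intpow]) simp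
    then show "monoA (2 * ((state_balance st - 3 * writhe w) div 2)) * loop_value ^ (num_loops n w st - 1)
      = monoA (- 3 * writhe w) * monoA (state_balance st) * loop_value ^ (num_loops n w st - 1)"
      by (simp only: fls_X_intpow_times_fls_X_intpow)
  qed
  also have "\<dots> = jones_A n w"
    unfolding jones_A_def kauffman_bracket_def parity_sign_def state_balance_def
    by (simp add: sum_distrib_left mult.assoc)
  finally have "jones_A n w = fls_compose_power ?J 2" ..
  moreover have "fls_compose_power f 2 $$ (2 * k) = f $$ k" for f :: "int fls" and k
    by (simp add: fls_nth_compose_power)
  ultimately have "jones n w = Abs_fls (fls_nth ?J)"
    unfolding jones_def by (simp only:)
  then show ?thesis by (simp add: fls_nth_inverse)
qed

lemma fls_nth_monoA_mult: "(monoA a * f) $$ k = f $$ (k - a)"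
  by (simp add: fls_X_intpow_times_conv_shift)

lemma sum_atLeastAtMost_shift_int:
  "(\<Sum>k\<in>{lo..hi::int}. g (k + c)) = (\<Sum>k\<in>{lo + c..hi + c}. g k)"
proof -
  have "(\<Sum>k\<in>{lo + c..hi + c}. g k) = (\<Sum>k\<in>(\<lambda>k. k + c) ` {lo..hi}. g k)" by simp
  also have "\<dots> = (\<Sum>k\<in>{lo..hi}. g (k + c))" by (subst sum.reindex) (auto simp: inj_on_def)
  finally show ?thesis by simp
qed

lemma fls_nth_loop_value_s_mult: "(loop_value_s * f) $$ k = - f $$ (k - 1) - f $$ (k + 1)"
proof -
  have "loop_value_s * f = - (monoA 1 * f) - monoA (-1) * f"
    unfolding loop_value_s_def by (simp add: algebra_simps)
  then show ?thesis by (simp only: fls_minus_nth fls_uminus_nth fls_nth_monoA_mult) simp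
qed

text \<open>Summing all coefficients evaluates at s = 1, where the loop value is -2.\<close>

lemma sum_coeffs_loop_value_s_power:
  "lo \<le> - int L \<Longrightarrow> int L \<le> hi \<Longrightarrow> (\<Sum>k\<in>{lo..hi}. (loop_value_s ^ L) $$ k) = (-2) ^ L"
proof (induction L arbitrary: lo hi)
  case 0
  then show ?case by simp
next
  case (Suc L)
  have "(\<Sum>k\<in>{lo..hi}. (loop_value_s ^ Suc L) $$ k)
      = - (\<Sum>k\<in>{lo..hi}. (loop_value_s ^ L) $$ (k + -1)) - (\<Sum>k\<in>{lo..hi}. (loop_value_s ^ L) $$ (k + 1))"
    by (simp add: fls_nth_loop_value_s_mult sum_subtractf sum_negf)
  also have "\<dots> = - (\<Sum>k\<in>{lo + -1..hi + -1}. (loop_value_s ^ L) $$ k)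
      - (\<Sum>k\<in>{lo + 1..hi + 1}. (loop_value_s ^ L) $$ k)"
    by (simp only: sum_atLeastAtMost_shift_int)
  also have "\<dots> = (-2) ^ Suc L"
    using Suc.prems by (simp add: Suc.IH)
  finally show ?case .
qed

lemma sum_coeffs_state_sum:
  assumes "finite A"
  shows "\<exists>N. (\<Sum>k\<in>{-N..N}. (\<Sum>x\<in>A. monoA (a x) * loop_value_s ^ L x) $$ k) = (\<Sum>x\<in>A. (-2) ^ L x)"
proof
  define N where "N = (\<Sum>x\<in>A. \<bar>a x\<bar> + int (L x))"
  have summand: "(\<Sum>k\<in>{-N..N}. (monoA (a x) * loop_value_s ^ L x) $$ k) = (-2) ^ L x" if "x \<in> A" for x
  proof -
    have "\<bar>a x\<bar> + int (L x) \<le> N"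
      unfolding N_def using assms that by (intro member_le_sum) auto
    have "(\<Sum>k\<in>{-N..N}. (monoA (a x) * loop_value_s ^ L x) $$ k)
        = (\<Sum>k\<in>{-N..N}. (loop_value_s ^ L x) $$ (k + - a x))"
      by (simp add: fls_nth_monoA_mult)
    also have "\<dots> = (\<Sum>k\<in>{-N + - a x..N + - a x}. (loop_value_s ^ L x) $$ k)"
      by (rule sum_atLeastAtMost_shift_int)
    also have "\<dots> = (-2) ^ L x"
      using \<open>\<bar>a x\<bar> + int (L x) \<le> N\<close> by (intro sum_coeffs_loop_value_s_power) auto
    finally show ?thesis .
  qed
  show "(\<Sum>k\<in>{-N..N}. (\<Sum>x\<in>A. monoA (a x) * loop_value_s ^ L x) $$ k) = (\<Sum>x\<in>A. (-2) ^ L x)"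
    unfolding fls_nth_sum by (subst sum.swap) (simp add: summand)
qed

lemma sum_neg2_power_mod3: "(\<Sum>x\<in>A. (-2 :: int) ^ L x) mod 3 = int (card A) mod 3"
proof -
  have pow: "(-2 :: int) ^ j mod 3 = 1" for j
    using power_mod[of "-2 :: int" 3 j] by simp
  have "(\<Sum>x\<in>A. (-2 :: int) ^ L x) mod 3 = (\<Sum>x\<in>A. (-2 :: int) ^ L x mod 3) mod 3"
    by (simp add: mod_sum_eq)
  also have "\<dots> = int (card A) mod 3"
    by (simp add: pow)
  finally show ?thesis .
qed

lemma two_power_mod3_ne0: "(2 :: int) ^ m mod 3 \<noteq> 0"
proof -
  have "(2 :: int) ^ m mod 3 = 1 \<or> (2 :: int) ^ m mod 3 = 2"
  proof (induction m)
    case (Suc m)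
    have "(2 :: int) ^ Suc m mod 3 = 2 * ((2 :: int) ^ m mod 3) mod 3"
      by (simp add: mod_mult_right_eq)
    with Suc show ?case by auto
  qed simp
  then show ?thesis by auto
qed

lemma jones_nonzero:
  assumes "1 \<le> n"
  shows "jones n w \<noteq> 0"
proof
  define a where "a st = (state_balance st - 3 * writhe w) div 2" for st
  define L where "L st = num_loops n w st - 1" for st
  let ?states = "{st :: bool list. length st = length w}"
  assume "jones n w = 0"
  then have "(\<Sum>st\<in>?states. monoA (a st) * loop_value_s ^ L st) = 0"
    unfolding jones_state_sum a_def L_def by (simp add: parity_sign_def split: if_splits)
  moreover obtain N where "(\<Sum>k\<in>{-N..N}. (\<Sum>st\<in>?states. monoA (a st) * loop_value_s ^ L st) $$ k)
      = (\<Sum>st\<in>?states. (-2) ^ L st)"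
    using sum_coeffs_state_sum[OF finite_list_length] by blast
  ultimately have "(\<Sum>st\<in>?states. (-2 :: int) ^ L st) = 0"
    by simp
  then have "(2 :: int) ^ length w mod 3 = 0"
    using sum_neg2_power_mod3[of L ?states] by (simp add: card_bool_lists_length)
  then show False using two_power_mod3_ne0[of "length w"] by simp
qed

section \<open>Top degree of Laurent series\<close>

definition fls_deg_le :: "'a :: zero fls \<Rightarrow> int \<Rightarrow> bool" where
  "fls_deg_le f b \<longleftrightarrow> (\<forall>k>b. f $$ k = 0)"

definition fls_deg_bounded :: "'a :: zero fls \<Rightarrow> bool" where
  "fls_deg_bounded f \<longleftrightarrow> (\<exists>b. fls_deg_le f b)"

lemma fls_deg_le_add: "fls_deg_le f b \<Longrightarrow> fls_deg_le g c \<Longrightarrow> fls_deg_le (f + g) (max b c)"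
  unfolding fls_deg_le_def by auto

lemma fls_nth_mult_deg_le:
  fixes f g :: "'a :: comm_ring_1 fls"
  assumes "fls_deg_le f b" "fls_deg_le g c" "k \<ge> b + c"
  shows "(f * g) $$ k = (if k = b + c then f $$ b * g $$ c else 0)"
proof -
  have "(f * g) $$ k = (\<Sum>i = fls_subdegree f..k - fls_subdegree g. f $$ i * g $$ (k - i))"
    by (rule fls_times_nth(2))
  also have "\<dots> = (\<Sum>i = fls_subdegree f..k - fls_subdegree g. if k = b + c \<and> i = b then f $$ b * g $$ c else 0)"
  proof (rule sum.cong[OF refl])
    fix i
    show "f $$ i * g $$ (k - i) = (if k = b + c \<and> i = b then f $$ b * g $$ c else 0)"
    proof (cases "i > b")
      case True
      then show ?thesis using assms(1) unfolding fls_deg_le_def by auto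
    next
      case False
      then have "k - i > c \<or> (k = b + c \<and> i = b)" using assms(3) by auto
      then show ?thesis using assms(2) unfolding fls_deg_le_def by auto
    qed
  qed
  also have "\<dots> = (if k = b + c then f $$ b * g $$ c else 0)"
  proof (cases "k = b + c \<and> b \<in> {fls_subdegree f..k - fls_subdegree g}")
    case False
    then show ?thesis
      by auto
  qed simp
  finally show ?thesis .
qed

lemma fls_deg_le_mult:
  fixes f g :: "'a :: comm_ring_1 fls"
  shows "fls_deg_le f b \<Longrightarrow> fls_deg_le g c \<Longrightarrow> fls_deg_le (f * g) (b + c)"
  unfolding fls_deg_le_def[of "f * g"] by (simp add: fls_nth_mult_deg_le)

lemma fls_deg_bounded_add: "fls_deg_bounded f \<Longrightarrow> fls_deg_bounded g \<Longrightarrow> fls_deg_bounded (f + g)"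
  unfolding fls_deg_bounded_def using fls_deg_le_add by blast

lemma fls_deg_bounded_mult:
  fixes f g :: "'a :: comm_ring_1 fls"
  shows "fls_deg_bounded f \<Longrightarrow> fls_deg_bounded g \<Longrightarrow> fls_deg_bounded (f * g)"
  unfolding fls_deg_bounded_def using fls_deg_le_mult by blast

lemma fls_deg_bounded_sum:
  "(\<And>x. x \<in> A \<Longrightarrow> fls_deg_bounded (f x)) \<Longrightarrow> fls_deg_bounded (\<Sum>x\<in>A. f x)"
proof (induction A rule: infinite_finite_induct)
  case (insert x F)
  then show ?case by (simp add: fls_deg_bounded_add)
qed (auto simp: fls_deg_bounded_def fls_deg_le_def)

lemma fls_deg_bounded_monoA: "fls_deg_bounded (monoA a)"
  unfolding fls_deg_bounded_def fls_deg_le_def by (intro exI[of _ a]) simp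

lemma fls_deg_bounded_one: "fls_deg_bounded 1"
  unfolding fls_deg_bounded_def fls_deg_le_def by (intro exI[of _ 0]) simp

lemma fls_deg_bounded_power:
  fixes f :: "'a :: comm_ring_1 fls"
  shows "fls_deg_bounded f \<Longrightarrow> fls_deg_bounded (f ^ k)"
  by (induction k) (simp_all add: fls_deg_bounded_one fls_deg_bounded_mult)

lemma fls_deg_bounded_uminus: "fls_deg_bounded f \<Longrightarrow> fls_deg_bounded (- f)"
  unfolding fls_deg_bounded_def fls_deg_le_def by simp

lemma fls_deg_bounded_loop_value_s: "fls_deg_bounded loop_value_s"
  unfolding loop_value_s_def diff_conv_add_uminus
  by (intro fls_deg_bounded_add fls_deg_bounded_uminus fls_deg_bounded_monoA)

lemma fls_deg_le_imp_finite_support: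
  "fls_deg_le f b \<Longrightarrow> finite {k. f $$ k \<noteq> 0}"
proof -
  assume "fls_deg_le f b"
  then have "{k. f $$ k \<noteq> 0} \<subseteq> {fls_subdegree f..b}"
    unfolding fls_deg_le_def by (auto intro: fls_subdegree_leI simp: not_less[symmetric])
  then show ?thesis by (rule finite_subset) simp
qed

lemma fls_deg_ge:
  assumes "fls_deg_bounded f" "f $$ k \<noteq> 0"
  shows "k \<le> fls_deg f"
  using assms fls_deg_le_imp_finite_support unfolding fls_deg_bounded_def fls_deg_def
  by (auto intro: Max_ge)

lemma fls_deg_le_fls_deg:
  assumes "fls_deg_bounded f" "f \<noteq> 0"
  shows "fls_deg_le f (fls_deg f)" "f $$ fls_deg f \<noteq> 0"
proof -
  obtain b where "fls_deg_le f b" using assms(1) unfolding fls_deg_bounded_def by blast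
  then have "finite {k. f $$ k \<noteq> 0}" by (rule fls_deg_le_imp_finite_support)
  moreover have "{k. f $$ k \<noteq> 0} \<noteq> {}" using assms(2) by (auto simp: fls_eq_iff)
  ultimately show "f $$ fls_deg f \<noteq> 0" unfolding fls_deg_def using Max_in by blast
  show "fls_deg_le f (fls_deg f)"
    using fls_deg_ge[OF assms(1)] unfolding fls_deg_le_def by force
qed

section \<open>Powers of a single generator\<close>

definition alt_odd_powers :: "nat \<Rightarrow> int fls" where
  "alt_odd_powers e = (\<Sum>j<e. (-1) ^ j * monoA (2 * int j + 1))"

lemma sum_bool_lists_power_count:
  fixes X :: "'a :: comm_ring_1"
  shows "(\<Sum>b | length b = e. X ^ count_list b True) = (X + 1) ^ e"
proof (induction e)
  case (Suc e)
  then show ?case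
    by (simp add: sum_bool_lists_length_Suc sum_distrib_left[symmetric] distrib_right)
qed simp

text \<open>Summing over the states of a block of e equal crossings: with r of them A-smoothed,
  the block contributes s^r and, for r > 0, r - 1 extra loops.\<close>

lemma sum_power_block_states:
  "(\<Sum>b | length b = e. monoA (int (count_list b True)) *
      (if count_list b True = 0 then D0 else DU * loop_value_s ^ (count_list b True - 1)))
    = D0 + DU * alt_odd_powers e"
proof (induction e)
  case 0
  then show ?case by (simp add: alt_odd_powers_def)
next
  case (Suc e)
  have monoA_nat: "monoA (int r) = monoA 1 ^ r" for r
    by (simp add: fls_X_intpow_power)
  have Cons_True: "count_list (True # b) True = Suc (count_list b True)" for b
    by simp
  have summand: "monoA (int (count_list (True # b) True)) *
      (if count_list (True # b) True = 0 then D0 else DU * loop_value_s ^ (count_list (True # b) True - 1))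
    = DU * monoA 1 * (monoA 1 * loop_value_s) ^ count_list b True" for b
    unfolding Cons_True monoA_nat
    by (simp only: if_True Suc_not_Zero if_False diff_Suc_1 power_Suc power_mult_distrib mult_ac)
  have "monoA 1 * loop_value_s + 1 = - monoA 2"
    unfolding loop_value_s_def right_diff_distrib mult_minus_right fls_X_intpow_times_fls_X_intpow
    by simp
  then have "(\<Sum>b | length b = e. (monoA 1 * loop_value_s) ^ count_list b True) = (-1) ^ e * monoA 2 ^ e"
    by (simp only: sum_bool_lists_power_count power_minus[of "monoA 2"])
  moreover have "monoA 1 * ((-1) ^ e * monoA 2 ^ e) = (-1) ^ e * monoA (2 * int e + 1)"
    by (simp only: mult.left_commute[of "monoA 1"] fls_X_intpow_power fls_X_intpow_times_fls_X_intpow)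
      (rule arg_cong[where f = "\<lambda>k. (-1) ^ e * monoA k"], simp)
  ultimately have true_half: "(\<Sum>b | length b = e. monoA (int (count_list (True # b) True)) *
      (if count_list (True # b) True = 0 then D0 else DU * loop_value_s ^ (count_list (True # b) True - 1)))
    = DU * ((-1) ^ e * monoA (2 * int e + 1))"
    unfolding summand by (simp only: sum_distrib_left[symmetric] mult.assoc)
  moreover have "count_list (False # b) True = count_list b True" for b
    by simp
  moreover have "alt_odd_powers (Suc e) = alt_odd_powers e + (-1) ^ e * monoA (2 * int e + 1)"
    by (simp add: alt_odd_powers_def)
  ultimately show ?case
    using Suc.IH by (simp only: sum_bool_lists_length_Suc distrib_left add_ac)
qed

lemma fls_deg_bounded_alt_odd_powers: "fls_deg_bounded (alt_odd_powers e)"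
  unfolding alt_odd_powers_def
  by (intro fls_deg_bounded_sum fls_deg_bounded_mult fls_deg_bounded_power fls_deg_bounded_uminus
      fls_deg_bounded_monoA fls_deg_bounded_one)

lemma fls_nth_neg1_power_mult: "((-1) ^ j * f :: 'a :: comm_ring_1 fls) $$ k = (-1) ^ j * f $$ k"
  by (cases "even j") auto

lemma fls_nth_alt_odd_powers:
  "alt_odd_powers e $$ k = (\<Sum>j<e. if k = 2 * int j + 1 then (-1) ^ j else 0)"
  unfolding alt_odd_powers_def fls_nth_sum by (intro sum.cong refl) (auto simp: fls_nth_neg1_power_mult)

lemma fls_subdegree_alt_odd_powers_nonneg: "0 \<le> fls_subdegree (alt_odd_powers e)"
  by (rule fls_subdegree_ge0I) (simp add: fls_nth_alt_odd_powers)

lemma fls_deg_le_alt_odd_powers: "fls_deg_le (alt_odd_powers e) (2 * int e - 1)"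
  unfolding fls_deg_le_def by (auto simp: fls_nth_alt_odd_powers intro!: sum.neutral)

lemma fls_nth_alt_odd_powers_top:
  assumes "e \<ge> 1"
  shows "alt_odd_powers e $$ (2 * int e - 1) = (-1) ^ (e - 1)"
proof -
  have "alt_odd_powers e $$ (2 * int e - 1) = (\<Sum>j<e. if j = e - 1 then (-1) ^ j else 0)"
    unfolding fls_nth_alt_odd_powers using assms by (intro sum.cong refl) auto
  also have "\<dots> = (-1) ^ (e - 1)" using assms by simp
  finally show ?thesis .
qed

lemma eventually_is_poly_s_power_block:
  fixes G H :: "int fls"
  shows "\<forall>\<^sub>F e in sequentially. is_poly_s (monoA (int e) * (G + H * alt_odd_powers e))"
  unfolding eventually_sequentially
proof (intro exI allI impI)
  fix e assume e: "nat (max (- fls_subdegree G) (- fls_subdegree H)) \<le> e"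
  show "is_poly_s (monoA (int e) * (G + H * alt_odd_powers e))"
    unfolding is_poly_s_def
  proof (intro allI impI)
    fix k :: int assume "k < 0"
    with e have "k - int e < fls_subdegree G" "k - int e < fls_subdegree H + fls_subdegree (alt_odd_powers e)"
      using fls_subdegree_alt_odd_powers_nonneg[of e] by auto
    then show "(monoA (int e) * (G + H * alt_odd_powers e)) $$ k = 0"
      by (simp add: fls_nth_monoA_mult fls_times_nth_eq0)
  qed
qed

text \<open>The growth comes from the top coefficient of H times s^(2e-1), the top term of the
  alternating sum; it eventually overtakes the fixed top degree of G.\<close>

lemma power_block_top_coeff:
  fixes G H :: "int fls"
  assumes "G \<noteq> 0" "fls_deg_bounded G" "fls_deg_bounded H"
  shows "\<exists>C. \<forall>\<^sub>F e in sequentially. \<exists>k \<ge> int e + C. (monoA (int e) * (G + H * alt_odd_powers e)) $$ k \<noteq> 0"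
proof (cases "H = 0")
  case True
  have "(monoA (int e) * (G + H * alt_odd_powers e)) $$ (int e + fls_deg G) \<noteq> 0" for e
    using True fls_deg_le_fls_deg(2)[OF assms(2,1)] by (simp add: fls_nth_monoA_mult)
  then have "\<forall>e. \<exists>k \<ge> int e + fls_deg G. (monoA (int e) * (G + H * alt_odd_powers e)) $$ k \<noteq> 0"
    by blast
  then show ?thesis
    by (intro exI[of _ "fls_deg G"] always_eventually)
next
  case False
  define dG dH where "dG = fls_deg G" and "dH = fls_deg H"
  have G: "fls_deg_le G dG" and H: "fls_deg_le H dH" "H $$ dH \<noteq> 0"
    using fls_deg_le_fls_deg assms False unfolding dG_def dH_def by blast+
  have "(monoA (int e) * (G + H * alt_odd_powers e)) $$ (int e + (dH + (2 * int e - 1))) \<noteq> 0"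
    if e: "e \<ge> max 1 (nat (dG - dH + 2))" for e
  proof -
    define q where "q = dH + (2 * int e - 1)"
    have "q > dG" using e unfolding q_def by auto
    then have "G $$ q = 0" using G unfolding fls_deg_le_def by simp
    moreover have "(H * alt_odd_powers e) $$ q = H $$ dH * (-1) ^ (e - 1)"
      using fls_nth_mult_deg_le[OF H(1) fls_deg_le_alt_odd_powers] fls_nth_alt_odd_powers_top e
      unfolding q_def by simp
    ultimately show ?thesis using H(2) by (simp add: fls_nth_monoA_mult flip: q_def)
  qed
  then have "\<exists>k \<ge> int e + (dH - 1). (monoA (int e) * (G + H * alt_odd_powers e)) $$ k \<noteq> 0"
    if "e \<ge> max 1 (nat (dG - dH + 2))" for e
    using that by (intro exI[of _ "int e + (dH + (2 * int e - 1))"]) auto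
  then show ?thesis
    unfolding eventually_sequentially by blast
qed

lemma power_block_eventually:
  fixes G H :: "int fls"
  assumes "G \<noteq> 0" "fls_deg_bounded G" "fls_deg_bounded H"
  shows "\<exists>C. \<forall>\<^sub>F e in sequentially. monoA (int e) * (G + H * alt_odd_powers e) \<noteq> 0
    \<and> is_poly_s (monoA (int e) * (G + H * alt_odd_powers e))
    \<and> int e + C \<le> fls_deg (monoA (int e) * (G + H * alt_odd_powers e))"
proof -
  obtain C where C: "\<forall>\<^sub>F e in sequentially. \<exists>k \<ge> int e + C. (monoA (int e) * (G + H * alt_odd_powers e)) $$ k \<noteq> 0"
    using power_block_top_coeff[OF assms] by blast
  have bounded: "fls_deg_bounded (monoA (int e) * (G + H * alt_odd_powers e))" for e
    using assms by (intro fls_deg_bounded_mult fls_deg_bounded_add fls_deg_bounded_monoA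
        fls_deg_bounded_alt_odd_powers)
  from C eventually_is_poly_s_power_block[of G H]
  have "\<forall>\<^sub>F e in sequentially. monoA (int e) * (G + H * alt_odd_powers e) \<noteq> 0
    \<and> is_poly_s (monoA (int e) * (G + H * alt_odd_powers e))
    \<and> int e + C \<le> fls_deg (monoA (int e) * (G + H * alt_odd_powers e))"
    by eventually_elim (use bounded in \<open>fastforce intro: order_trans[OF _ fls_deg_ge]\<close>)
  then show ?thesis ..
qed

lemma state_term_power_block:
  assumes "1 \<le> i" "i < n" "length u = length P" "length b = e" "length v = length S"
  defines "W \<equiv> P @ replicate e (i, True) @ S"
  shows "monoA ((state_balance (u @ b @ v) - 3 * writhe W) div 2)
           * loop_value_s ^ (num_loops n W (u @ b @ v) - 1)
       = monoA ((state_balance (u @ v) - 3 * writhe (P @ S)) div 2) * monoA (int e) *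
         (monoA (int (count_list b True)) *
          (if count_list b True = 0
           then loop_value_s ^ (loops n (smoothing_word P u @ smoothing_word S v) - 1)
           else loop_value_s ^ (loops n (smoothing_word P u @ (i, True) # smoothing_word S v) - 1)
             * loop_value_s ^ (count_list b True - 1)))"
proof -
  define r where "r = count_list b True"
  define L0 where "L0 = loops n (smoothing_word P u @ smoothing_word S v)"
  define L1 where "L1 = loops n (smoothing_word P u @ (i, True) # smoothing_word S v)"
  define a0 where "a0 = (state_balance (u @ v) - 3 * writhe (P @ S)) div 2"
  have "state_balance (u @ b @ v) - 3 * writhe W
      = (state_balance (u @ v) - 3 * writhe (P @ S)) + 2 * (int r + int e)"
    using assms(4) unfolding W_def r_def
    by (simp add: state_balance_append state_balance_eq writhe_append writhe_replicate_True)
  then have "(state_balance (u @ b @ v) - 3 * writhe W) div 2 = a0 + int r + int e"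
    unfolding a0_def by simp
  moreover have "monoA (a0 + int r + int e) = monoA a0 * monoA (int e) * monoA (int r)"
    by (simp only: fls_X_intpow_times_fls_X_intpow add_ac)
  ultimately have "monoA ((state_balance (u @ b @ v) - 3 * writhe W) div 2)
      = monoA a0 * monoA (int e) * monoA (int r)"
    by simp
  moreover have "num_loops n W (u @ b @ v) = (if r = 0 then L0 else L1 + r - 1)"
  proof -
    have "smoothing_word W (u @ b @ v) = smoothing_word P u @ map (Pair i) b @ smoothing_word S v"
      using assms(3-5) unfolding W_def by (simp add: smoothing_word_append smoothing_word_replicate)
    moreover have "length (u @ b @ v) = length W" using assms(3-5) unfolding W_def by simp
    ultimately show ?thesis
      unfolding L0_def L1_def r_def
      by (simp add: num_loops_eq_loops loops_power_horizontal[OF assms(1,2)] count_list_0_iff)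
  qed
  moreover have "1 \<le> L1" unfolding L1_def using assms(1,2) by (intro loops_pos) simp
  ultimately show ?thesis
    unfolding r_def[symmetric] L0_def[symmetric] L1_def[symmetric] a0_def[symmetric]
    by (cases "r = 0") (simp_all add: power_add[symmetric] mult_ac)
qed

lemma jones_power_block:
  assumes "1 \<le> i" "i < n"
  obtains G H where "fls_deg_bounded G" "fls_deg_bounded H"
    "\<And>e. jones n (P @ replicate e (i, True) @ S) =
      parity_sign (writhe (P @ S)) * (-1) ^ e * (monoA (int e) * (G + H * alt_odd_powers e))"
proof -
  define A where "A u v = monoA ((state_balance (u @ v) - 3 * writhe (P @ S)) div 2)" for u v
  define D0 where "D0 u v = loop_value_s ^ (loops n (smoothing_word P u @ smoothing_word S v) - 1)" for u v
  define DU where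
    "DU u v = loop_value_s ^ (loops n (smoothing_word P u @ (i, True) # smoothing_word S v) - 1)" for u v
  define G where "G = (\<Sum>u | length u = length P. \<Sum>v | length v = length S. A u v * D0 u v)"
  define H where "H = (\<Sum>u | length u = length P. \<Sum>v | length v = length S. A u v * DU u v)"
  have "fls_deg_bounded G" "fls_deg_bounded H"
    unfolding G_def H_def A_def D0_def DU_def
    by (intro fls_deg_bounded_sum fls_deg_bounded_mult fls_deg_bounded_monoA fls_deg_bounded_power
        fls_deg_bounded_loop_value_s)+
  moreover have "jones n (P @ replicate e (i, True) @ S) =
      parity_sign (writhe (P @ S)) * (-1) ^ e * (monoA (int e) * (G + H * alt_odd_powers e))" for e
  proof -
    define W where "W = P @ replicate e (i, True) @ S"
    define T where
      "T st = monoA ((state_balance st - 3 * writhe W) div 2) * loop_value_s ^ (num_loops n W st - 1)" for st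
    have "(\<Sum>st | length st = length W. T st)
        = (\<Sum>u | length u = length P. \<Sum>b | length b = e. \<Sum>v | length v = length S. T (u @ b @ v))"
      unfolding W_def by (simp add: sum_bool_lists_length_add)
    also have "\<dots> = (\<Sum>u | length u = length P. \<Sum>v | length v = length S. \<Sum>b | length b = e.
        A u v * monoA (int e) * (monoA (int (count_list b True)) *
          (if count_list b True = 0 then D0 u v else DU u v * loop_value_s ^ (count_list b True - 1))))"
      unfolding T_def W_def A_def D0_def DU_def
      by (subst sum.swap) (intro sum.cong refl state_term_power_block[OF assms]; simp)
    also have "\<dots> = (\<Sum>u | length u = length P. \<Sum>v | length v = length S.
        A u v * monoA (int e) * (D0 u v + DU u v * alt_odd_powers e))"
      by (simp only: sum_distrib_left[symmetric] sum_power_block_states)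
    also have "\<dots> = monoA (int e) * (G + H * alt_odd_powers e)"
      unfolding G_def H_def
      by (simp add: sum_distrib_left sum_distrib_right sum.distrib algebra_simps)
    finally have "(\<Sum>st | length st = length W. T st) = monoA (int e) * (G + H * alt_odd_powers e)" .
    moreover have "parity_sign (writhe W) = parity_sign (writhe (P @ S)) * (-1) ^ e"
      unfolding W_def parity_sign_def
      by (cases "even e") (auto simp: writhe_append writhe_replicate_True even_add)
    ultimately show ?thesis
      unfolding W_def[symmetric] T_def[symmetric] jones_state_sum by (simp add: mult.assoc)
  qed
  ultimately show thesis by (rule that)
qed

lemma sign_mult_iff:
  fixes u f :: "int fls"
  assumes "u = 1 \<or> u = -1"
  shows "u * f \<noteq> 0 \<longleftrightarrow> f \<noteq> 0" "is_poly_s (u * f) \<longleftrightarrow> is_poly_s f" "fls_deg (u * f) = fls_deg f"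
proof -
  have nth: "(u * f) $$ k = 0 \<longleftrightarrow> f $$ k = 0" for k using assms by auto
  show "u * f \<noteq> 0 \<longleftrightarrow> f \<noteq> 0" using nth by (auto simp: fls_eq_iff)
  show "is_poly_s (u * f) \<longleftrightarrow> is_poly_s f" using nth unfolding is_poly_s_def by auto
  show "fls_deg (u * f) = fls_deg f" using nth unfolding fls_deg_def by auto
qed

lemma jones_power_eventually:
  assumes "1 \<le> i" "i < n"
  shows "\<exists>C. \<forall>\<^sub>F e in at_top. jones n (P @ gen_pow i e @ S) \<noteq> 0
    \<and> is_poly_s (jones n (P @ gen_pow i e @ S)) \<and> e + C \<le> fls_deg (jones n (P @ gen_pow i e @ S))"
proof -
  obtain G H where bounded: "fls_deg_bounded G" "fls_deg_bounded H"
    and jones: "\<And>e. jones n (P @ replicate e (i, True) @ S) =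
      parity_sign (writhe (P @ S)) * (-1) ^ e * (monoA (int e) * (G + H * alt_odd_powers e))"
    using jones_power_block[OF assms] by blast
  have sign: "parity_sign (writhe (P @ S)) * (-1) ^ e = 1 \<or> parity_sign (writhe (P @ S)) * (-1) ^ e = -1"
    for e :: nat
    unfolding parity_sign_def by (cases "even e") auto
  have "jones n (P @ replicate 0 (i, True) @ S) \<noteq> 0"
    using assms by (intro jones_nonzero) simp
  then have "G \<noteq> 0"
    unfolding jones sign_mult_iff[OF sign] by (simp add: alt_odd_powers_def)
  then obtain C where C: "\<forall>\<^sub>F e in sequentially. monoA (int e) * (G + H * alt_odd_powers e) \<noteq> 0
    \<and> is_poly_s (monoA (int e) * (G + H * alt_odd_powers e))
    \<and> int e + C \<le> fls_deg (monoA (int e) * (G + H * alt_odd_powers e))"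
    using power_block_eventually bounded by blast
  have "\<forall>\<^sub>F e in at_top. jones n (P @ replicate (nat e) (i, True) @ S) \<noteq> 0
    \<and> is_poly_s (jones n (P @ replicate (nat e) (i, True) @ S))
    \<and> int (nat e) + C \<le> fls_deg (jones n (P @ replicate (nat e) (i, True) @ S))"
    using eventually_compose_filterlim[OF C filterlim_nat_sequentially]
    unfolding jones sign_mult_iff[OF sign] .
  moreover have "\<forall>\<^sub>F e in at_top. (0 :: int) \<le> e"
    by (rule eventually_ge_at_top)
  ultimately have "\<forall>\<^sub>F e in at_top. jones n (P @ gen_pow i e @ S) \<noteq> 0
    \<and> is_poly_s (jones n (P @ gen_pow i e @ S)) \<and> e + C \<le> fls_deg (jones n (P @ gen_pow i e @ S))"
    by eventually_elim (simp add: gen_pow_def)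
  then show ?thesis ..
qed

lemma concat_map_split_at:
  assumes "j \<in> {1..k}"
  shows "concat (map (\<lambda>h. f h (if h = j then x else a h)) [1..<Suc k])
    = concat (map (\<lambda>h. f h (a h)) [1..<j]) @ f j x @ concat (map (\<lambda>h. f h (a h)) [Suc j..<Suc k])"
proof -
  have "[1..<Suc k] = [1..<j] @ [j..<Suc k]"
    using assms upt_add_eq_append[of 1 j "Suc k - j"] by simp
  also have "[j..<Suc k] = j # [Suc j..<Suc k]"
    using assms by (simp add: upt_conv_Cons)
  finally have split: "[1..<Suc k] = [1..<j] @ j # [Suc j..<Suc k]" .
  have skip: "map (\<lambda>h. f h (if h = j then x else a h)) hs = map (\<lambda>h. f h (a h)) hs"
    if "j \<notin> set hs" for hs
    using that by (intro map_cong) auto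
  have j: "j \<notin> set [1..<j]" "j \<notin> set [Suc j..<Suc k]" by auto
  show ?thesis
    unfolding split map_append list.map concat_append concat.simps skip[OF j(1)] skip[OF j(2)]
    by simp
qed

theorem proposition1p4:
  fixes n k j :: nat and i :: "nat \<Rightarrow> nat" and a :: "nat \<Rightarrow> int"
  assumes "n \<ge> 2" and "k \<ge> 1"
    and "\<forall>h \<in> {1..k}. 1 \<le> i h \<and> i h \<le> n - 1"
    and "j \<in> {1..k}"
  defines "W \<equiv> (\<lambda>e::int. concat (map (\<lambda>h. gen_pow (i h) (if h = j then e else a h)) [1..<Suc k]))"
  shows "(\<forall>\<^sub>F e in at_top. jones n (W e) \<noteq> 0 \<and> is_poly_s (jones n (W e)))
     \<and> filterlim (\<lambda>e. fls_deg (jones n (W e))) at_top at_top"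
proof -
  have i: "1 \<le> i j" "i j < n" using assms(1,3,4) by force+
  define P where "P = concat (map (\<lambda>h. gen_pow (i h) (a h)) [1..<j])"
  define S where "S = concat (map (\<lambda>h. gen_pow (i h) (a h)) [Suc j..<Suc k])"
  have W: "W e = P @ gen_pow (i j) e @ S" for e
    unfolding W_def P_def S_def by (rule concat_map_split_at[OF assms(4)])
  obtain C where C: "\<forall>\<^sub>F e in at_top. jones n (W e) \<noteq> 0 \<and> is_poly_s (jones n (W e))
      \<and> e + C \<le> fls_deg (jones n (W e))"
    unfolding W using jones_power_eventually[OF i] by blast
  then have "\<forall>\<^sub>F e in at_top. jones n (W e) \<noteq> 0 \<and> is_poly_s (jones n (W e))"
    by (rule eventually_mono) blast
  moreover have "filterlim (\<lambda>e. fls_deg (jones n (W e))) at_top at_top"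
    unfolding filterlim_at_top
  proof
    fix Z :: int
    from C eventually_ge_at_top[of "Z - C"] show "\<forall>\<^sub>F e in at_top. Z \<le> fls_deg (jones n (W e))"
      by eventually_elim linarith
  qed
  ultimately show ?thesis ..
qed

end
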